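(* Let $X=\{a,b,c\}$, $S=X^*$, and let $\mathcal{L}\subseteq 2^{X^*}$ be a nontrivial language family which is closed under finite unions, under left markers ($wL\in\mathcal{L}$ for $w\in X^*$, $L\in\mathcal{L}$), under left quotients by words ($w^{-1}L=\{v\in X^*: wv\in L\}\in\mathcal{L}$ for $w\in X^*$, $L\in\mathcal{L}$), and under regular variation ($L\cup R\in\mathcal{L}$ and $L\cap R\in\mathcal{L}$ for all $L\in\mathcal{L}$ and regular $R\subseteq X^*$). Let $A\subseteq X^*$ with $A\notin\mathcal{L}$ or $X^*\setminus A\notin\mathcal{L}$, and put $A_{xy}=xA\cup y(X^*\setminus A)$ for $x,y\in X$ and $\mathbf{C}(A)=(A_{ab},A_{bc},A_{ca})$. Then $\mathbf{C}(A)\notin\mathit{class}_3(\mathcal{L})$, and for every classification problem $\mathbf{B}\le\mathbf{C}(A)$ with $|\mathbf{B}|=3$ we have $\mathbf{B}\notin\mathit{core}_3(\mathcal{L})$.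
   Context: $\mathcal{L}$ is nontrivial if $\emptyset,X^*\in\mathcal{L}$ and for all $Q\in\mathcal{L}$ and finite $E\subseteq X^*$ both $Q\cup E\in\mathcal{L}$ and $Q\setminus E\in\mathcal{L}$. A classification problem is a vector $(A_1,\dots,A_k)$, $k\ge1$, of pairwise disjoint infinite subsets of $X^*$, of length $k$. For vectors $\mathbf{B}=(B_1,\dots,B_m)$, $\mathbf{Q}=(Q_1,\dots,Q_k)$, $\mathbf{B}\le\mathbf{Q}$ means $1\le m\le k$ and there is an injective $\sigma:\{1,\dots,m\}\to\{1,\dots,k\}$ with $B_i\subseteq Q_{\sigma(i)}$. An $\mathcal{L}$-partition is a vector of pairwise disjoint members of $\mathcal{L}$ whose union is $X^*$. $\mathit{class}_k(\mathcal{L})$: classification problems $\mathbf{A}$ of length $k$ with $\mathbf{A}\le\mathbf{Q}$ for some $\mathcal{L}$-partition $\mathbf{Q}$ of length $k$. For $k>1$, $\mathit{core}_k(\mathcal{L})$ is the set of classification problems $\mathbf{A}$ of length $k$ such that every classification problem $\mathbf{A}'\le\mathbf{A}$ with $|\mathbf{A}'|>1$ satisfies $\mathbf{A}'\notin\mathit{class}_{|\mathbf{A}'|}(\mathcal{L})$. *)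

theory Defs
  imports Main
begin

text \<open>The alphabet X = {a,b,c}; words are lists, X* is UNIV :: sym list set.\<close>
datatype sym = a | b | c

type_synonym lang = "sym list set"

definition lconc :: "lang \<Rightarrow> lang \<Rightarrow> lang" where
  "lconc A B = {u @ v | u v. u \<in> A \<and> v \<in> B}"

definition lstar :: "lang \<Rightarrow> lang" where
  "lstar A = {concat ws | ws. set ws \<subseteq> A}"

inductive regular :: "lang \<Rightarrow> bool" where
  reg_empty: "regular {}"
| reg_eps: "regular {[]}"
| reg_sym: "regular {[x]}"
| reg_union: "regular A \<Longrightarrow> regular B \<Longrightarrow> regular (A \<union> B)"
| reg_conc: "regular A \<Longrightarrow> regular B \<Longrightarrow> regular (lconc A B)"
| reg_star: "regular A \<Longrightarrow> regular (lstar A)"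

definition nontrivial :: "lang set \<Rightarrow> bool" where
  "nontrivial \<L> \<longleftrightarrow> {} \<in> \<L> \<and> UNIV \<in> \<L> \<and>
     (\<forall>Q\<in>\<L>. \<forall>E. finite E \<longrightarrow> Q \<union> E \<in> \<L> \<and> Q - E \<in> \<L>)"

text \<open>Vectors (A_1,...,A_k) are lists of languages; the length is the list length.\<close>
definition classification_problem :: "lang list \<Rightarrow> bool" where
  "classification_problem As \<longleftrightarrow> length As \<ge> 1 \<and>
     (\<forall>i<length As. infinite (As ! i)) \<and>
     (\<forall>i<length As. \<forall>j<length As. i \<noteq> j \<longrightarrow> As ! i \<inter> As ! j = {})"

definition vle :: "lang list \<Rightarrow> lang list \<Rightarrow> bool" where
  "vle Bs Qs \<longleftrightarrow> 1 \<le> length Bs \<and> length Bs \<le> length Qs \<and>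
     (\<exists>\<sigma>. inj_on \<sigma> {..<length Bs} \<and> \<sigma> ` {..<length Bs} \<subseteq> {..<length Qs} \<and>
          (\<forall>i<length Bs. Bs ! i \<subseteq> Qs ! (\<sigma> i)))"

definition L_partition :: "lang set \<Rightarrow> lang list \<Rightarrow> bool" where
  "L_partition \<L> Qs \<longleftrightarrow> (\<forall>i<length Qs. Qs ! i \<in> \<L>) \<and>
     (\<forall>i<length Qs. \<forall>j<length Qs. i \<noteq> j \<longrightarrow> Qs ! i \<inter> Qs ! j = {}) \<and>
     \<Union>(set Qs) = UNIV"

definition classk :: "nat \<Rightarrow> lang set \<Rightarrow> lang list set" where
  "classk k \<L> = {As. classification_problem As \<and> length As = k \<and>
     (\<exists>Qs. L_partition \<L> Qs \<and> length Qs = k \<and> vle As Qs)}"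

definition core :: "nat \<Rightarrow> lang set \<Rightarrow> lang list set" where
  "core k \<L> = {As. classification_problem As \<and> length As = k \<and>
     (\<forall>A'. classification_problem A' \<and> vle A' As \<and> length A' > 1 \<longrightarrow>
        A' \<notin> classk (length A') \<L>)}"

definition Axy :: "sym \<Rightarrow> sym \<Rightarrow> lang \<Rightarrow> lang" where
  "Axy x y A = (\<lambda>v. x # v) ` A \<union> (\<lambda>v. y # v) ` (- A)"

definition CA :: "lang \<Rightarrow> lang list" where
  "CA A = [Axy a b A, Axy b c A, Axy c a A]"

end

theory Submission
  imports Defs
begin

text \<open>If a partition in \<L> separated C(A), its classes P \<supseteq> A_ab and Q \<supseteq> A_ca would be disjoint
  with a A \<subseteq> P and a (X* \<setminus> A) \<subseteq> Q, so the left quotients of P and Q by a, both in \<L>, would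
  be A and X* \<setminus> A.
  On the other hand, every infinite language has an infinite part with a fixed initial letter.
  Each letter occurs initially in only two of the three components of C(A), so two components
  of any B \<le> C(A) of length 3 have infinite parts with different initial letters x and y, and
  these are separated by the regular partition (x X*, X* \<setminus> x X*).\<close>

lemma UNIV_sym: "(UNIV :: sym set) = {a, b, c}"
  using sym.exhaust by auto

lemma finite_UNIV_sym: "finite (UNIV :: sym set)"
  by (simp add: UNIV_sym)

lemma regular_Union: "finite F \<Longrightarrow> (\<And>A. A \<in> F \<Longrightarrow> regular A) \<Longrightarrow> regular (\<Union>F)"
  by (induction F rule: finite_induct) (auto intro: reg_empty reg_union)

lemma regular_letters: "regular (\<Union>x\<in>X. {[x]})"
  using finite_subset[OF subset_UNIV finite_UNIV_sym]
  by (intro regular_Union) (auto intro: reg_sym)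

lemma regular_UNIV: "regular (UNIV :: lang)"
proof -
  have "w \<in> lstar (\<Union>x. {[x]})" for w
    unfolding lstar_def by (auto intro!: exI[of _ "map (\<lambda>x. [x]) w"])
  then have "UNIV = lstar (\<Union>x. {[x]})"
    by auto
  then show ?thesis
    by (metis reg_star regular_letters)
qed

definition starting_with :: "sym \<Rightarrow> lang" where
  "starting_with x = range (Cons x)"

lemma starting_with_disjoint: "x \<noteq> y \<Longrightarrow> starting_with x \<inter> starting_with y = {}"
  by (auto simp: starting_with_def)

lemma starting_with_conv_lconc: "starting_with x = lconc {[x]} UNIV"
  by (auto simp: starting_with_def lconc_def)

lemma Compl_starting_with_conv_lconc: "- starting_with x = {[]} \<union> lconc (\<Union>y\<in>- {x}. {[y]}) UNIV"
  by (auto simp: starting_with_def lconc_def neq_Nil_conv)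
    (metis append_Cons append_Nil ComplI rangeI singletonD)

lemma regular_starting_with: "regular (starting_with x)"
  unfolding starting_with_conv_lconc by (rule reg_conc[OF reg_sym regular_UNIV])

lemma regular_Compl_starting_with: "regular (- starting_with x)"
  unfolding Compl_starting_with_conv_lconc
  by (rule reg_union[OF reg_eps reg_conc[OF regular_letters regular_UNIV]])

lemma infinite_starting_with:
  assumes "infinite B"
  obtains x where "infinite (B \<inter> starting_with x)"
proof -
  have "B \<subseteq> {[]} \<union> (\<Union>x. B \<inter> starting_with x)"
    by (auto simp: starting_with_def neq_Nil_conv) blast
  then have "infinite (\<Union>x. B \<inter> starting_with x)"
    using assms finite_subset by blast
  then show ?thesis
    using that finite_UNIV_sym by blast
qed

lemma regular_mem_family:
  assumes "nontrivial \<L>" and "\<And>L R. L \<in> \<L> \<Longrightarrow> regular R \<Longrightarrow> L \<union> R \<in> \<L> \<and> L \<inter> R \<in> \<L>"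
    and "regular R"
  shows "R \<in> \<L>"
  using assms(2)[of "{}" R] assms(1,3) by (auto simp: nontrivial_def)

lemma quotient_eq_of_disjoint_classes:
  assumes "P \<inter> Q = {}" "Cons x ` A \<subseteq> P" "Cons x ` (- A) \<subseteq> Q"
  shows "{v. [x] @ v \<in> P} = A"
  using assms unfolding image_subset_iff by auto

lemma vleE:
  assumes "vle Bs Qs"
  obtains \<sigma> where "inj_on \<sigma> {..<length Bs}"
    "\<And>i. i < length Bs \<Longrightarrow> \<sigma> i < length Qs \<and> Bs ! i \<subseteq> Qs ! \<sigma> i"
proof -
  from assms obtain \<sigma> where "inj_on \<sigma> {..<length Bs}" "\<sigma> ` {..<length Bs} \<subseteq> {..<length Qs}"
    and "\<forall>i<length Bs. Bs ! i \<subseteq> Qs ! \<sigma> i"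
    unfolding vle_def by (elim conjE exE)
  then show ?thesis
    by (intro that[of \<sigma>]) auto
qed

lemma length_CA [simp]: "length (CA A) = 3"
  by (simp add: CA_def)

lemma CA_not_in_classk:
  assumes "\<And>w L. L \<in> \<L> \<Longrightarrow> {v. w @ v \<in> L} \<in> \<L>" and "A \<notin> \<L> \<or> - A \<notin> \<L>"
  shows "CA A \<notin> classk k \<L>"
proof
  assume "CA A \<in> classk k \<L>"
  then obtain Qs where part: "L_partition \<L> Qs" and le: "vle (CA A) Qs"
    by (auto simp: classk_def)
  obtain \<sigma> where inj: "inj_on \<sigma> {..<3}"
    and \<sigma>: "\<And>i. i < 3 \<Longrightarrow> \<sigma> i < length Qs \<and> CA A ! i \<subseteq> Qs ! \<sigma> i"
    using vleE[OF le, unfolded length_CA] by blast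
  define P Q where "P = Qs ! \<sigma> 0" and "Q = Qs ! \<sigma> 2"
  have "\<sigma> 0 \<noteq> \<sigma> 2"
    using inj_on_eq_iff[OF inj, of 0 2] by simp
  then have "P \<inter> Q = {}" "P \<in> \<L>" "Q \<in> \<L>"
    using part \<sigma>[of 0] \<sigma>[of 2] by (auto simp: L_partition_def P_def Q_def)
  moreover have "Axy a b A \<subseteq> P" "Axy c a A \<subseteq> Q"
    using \<sigma>[of 0] \<sigma>[of 2] by (auto simp: P_def Q_def CA_def)
  then have "{v. [a] @ v \<in> P} = A" "{v. [a] @ v \<in> Q} = - A"
    using \<open>P \<inter> Q = {}\<close> by (auto simp: Axy_def intro!: quotient_eq_of_disjoint_classes)
  ultimately show False
    using assms by metis
qed

lemma separable_by_initials:
  assumes "\<And>R. regular R \<Longrightarrow> R \<in> \<L>" and "x \<noteq> y"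
    and "infinite B\<^sub>1" "B\<^sub>1 \<subseteq> starting_with x" and "infinite B\<^sub>2" "B\<^sub>2 \<subseteq> starting_with y"
  shows "[B\<^sub>1, B\<^sub>2] \<in> classk 2 \<L>"
proof -
  have disj: "B\<^sub>1 \<inter> B\<^sub>2 = {}"
    using assms(2,4,6) starting_with_disjoint by blast
  have "L_partition \<L> [starting_with x, - starting_with x]"
    using assms(1)[OF regular_starting_with] assms(1)[OF regular_Compl_starting_with]
    by (auto simp: L_partition_def less_Suc_eq nth_Cons')
  moreover have "vle [B\<^sub>1, B\<^sub>2] [starting_with x, - starting_with x]"
    unfolding vle_def using assms(4,6) starting_with_disjoint[OF assms(2)]
    by (intro conjI exI[of _ id]) (auto simp: less_Suc_eq)
  ultimately show ?thesis
    using assms(3,5) disj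
    by (auto simp: classk_def classification_problem_def less_Suc_eq nth_Cons')
qed

lemma not_core_of_distinct_initials:
  assumes "\<And>R. regular R \<Longrightarrow> R \<in> \<L>"
    and "i < length Bs" "j < length Bs" "i \<noteq> j" "x \<noteq> y"
    and "infinite (Bs ! i \<inter> starting_with x)" "infinite (Bs ! j \<inter> starting_with y)"
  shows "Bs \<notin> core k \<L>"
proof -
  let ?B = "[Bs ! i \<inter> starting_with x, Bs ! j \<inter> starting_with y]"
  have "?B \<in> classk 2 \<L>"
    by (rule separable_by_initials) (use assms in auto)
  then have sep: "?B \<in> classk (length ?B) \<L>"
    by (simp add: numeral_2_eq_2)
  have "vle ?B Bs"
    unfolding vle_def using assms(2-4)
    by (intro conjI exI[of _ "\<lambda>k. if k = 0 then i else j"]) (auto simp: inj_on_def less_Suc_eq)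
  then have "?B \<notin> classk (length ?B) \<L>" if "Bs \<in> core k \<L>"
    using that sep by (auto simp: core_def classk_def)
  with sep show ?thesis
    by blast
qed

lemma CA_misses_initial: "k < 3 \<Longrightarrow> CA A ! k \<inter> starting_with ([c, a, b] ! k) = {}"
  by (auto simp: numeral_3_eq_3 less_Suc_eq CA_def Axy_def starting_with_def)

lemma vle_CA_distinct_initials:
  assumes "vle Bs (CA A)" "length Bs = 3" "\<And>i. i < 3 \<Longrightarrow> infinite (Bs ! i)"
  obtains i j x y where "i < 3" "j < 3" "i \<noteq> j" "x \<noteq> y"
    "infinite (Bs ! i \<inter> starting_with x)" "infinite (Bs ! j \<inter> starting_with y)"
proof -
  have "\<exists>x. infinite (Bs ! i \<inter> starting_with x)" if "i < 3" for i
    using infinite_starting_with[OF assms(3)[OF that]] by blast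
  then obtain ini where ini: "\<And>i. i < 3 \<Longrightarrow> infinite (Bs ! i \<inter> starting_with (ini i))"
    by metis
  obtain \<sigma> where inj: "inj_on \<sigma> {..<3}"
    and \<sigma>: "\<And>i. i < 3 \<Longrightarrow> \<sigma> i < 3 \<and> Bs ! i \<subseteq> CA A ! \<sigma> i"
    using vleE[OF assms(1), unfolded length_CA assms(2)] by blast
  have misses: "ini i \<noteq> [c, a, b] ! \<sigma> i" if "i < 3" for i
  proof
    assume "ini i = [c, a, b] ! \<sigma> i"
    then have "Bs ! i \<inter> starting_with (ini i) = {}"
      using CA_misses_initial[of "\<sigma> i" A] \<sigma>[OF that] by auto
    then show False
      using ini[OF that] by simp
  qed
  have "\<exists>i<3. \<exists>j<3. ini i \<noteq> ini j"
  proof (rule ccontr)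
    assume "\<not> ?thesis"
    then have const: "ini i = ini 0" if "i < 3" for i
      using that zero_less_numeral[where 'a = nat] by blast
    have "\<sigma> ` {..<3} = {..<3}"
      using \<sigma> by (intro endo_inj_surj inj) auto
    then have "\<exists>i<3. \<sigma> i = k" if "k < 3" for k
      using that by (metis imageE lessThan_iff)
    then have "ini 0 \<noteq> [c, a, b] ! k" if "k < 3" for k
      using that misses const by metis
    from this[of 0] this[of 1] this[of 2] show False
      using UNIV_sym by auto
  qed
  then show ?thesis
    using that ini by metis
qed

theorem theorem3p6:
  fixes \<L> :: "lang set" and A :: lang
  assumes "nontrivial \<L>"
    and "\<And>L1 L2. L1 \<in> \<L> \<Longrightarrow> L2 \<in> \<L> \<Longrightarrow> L1 \<union> L2 \<in> \<L>"
    and "\<And>w L. L \<in> \<L> \<Longrightarrow> (\<lambda>v. w @ v) ` L \<in> \<L>"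
    and "\<And>w L. L \<in> \<L> \<Longrightarrow> {v. w @ v \<in> L} \<in> \<L>"
    and "\<And>L R. L \<in> \<L> \<Longrightarrow> regular R \<Longrightarrow> L \<union> R \<in> \<L> \<and> L \<inter> R \<in> \<L>"
    and "A \<notin> \<L> \<or> - A \<notin> \<L>"
  shows "CA A \<notin> classk 3 \<L> \<and>
    (\<forall>Bs. classification_problem Bs \<and> vle Bs (CA A) \<and> length Bs = 3 \<longrightarrow> Bs \<notin> core 3 \<L>)"
proof (intro conjI allI impI)
  show "CA A \<notin> classk 3 \<L>"
    using assms(4,6) by (rule CA_not_in_classk)
next
  fix Bs
  assume Bs: "classification_problem Bs \<and> vle Bs (CA A) \<and> length Bs = 3"
  then have "\<And>i. i < 3 \<Longrightarrow> infinite (Bs ! i)"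
    by (auto simp: classification_problem_def)
  with Bs obtain i j x y where "i < length Bs" "j < length Bs" "i \<noteq> j" "x \<noteq> y"
    and "infinite (Bs ! i \<inter> starting_with x)" "infinite (Bs ! j \<inter> starting_with y)"
    using vle_CA_distinct_initials by (metis (no_types, lifting))
  moreover have "\<And>R. regular R \<Longrightarrow> R \<in> \<L>"
    using assms(1,5) by (rule regular_mem_family)
  ultimately show "Bs \<notin> core 3 \<L>"
    by (rule not_core_of_distinct_initials[rotated])
qed

end
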